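(* With the notation of the context, suppose $\delta\in(0,1/2]$ and $\alpha=\frac{1}{\log_2(1/\delta)}$ (so $\alpha\le 1$), and $\frac{\delta}{\log_2(1/\delta)} = 4\kappa\sqrt N + \frac{1}{\sqrt N}$. Then $\mathcal W(x^* )\le -\frac{1}{\sqrt N}$.
   Context: Let $v_1,\dots,v_N$ be an orthonormal family in $\mathbb{R}^d$ and $x^*=-\frac{1}{\sqrt N}\sum_{i=1}^N v_i$. Let $\kappa>0$, $\delta\in(0,1)$, $\alpha>0$. Correlation cones: $C_i=\{x\ne 0: |v_i\cdot x|/\|x\|\ge \kappa\}$. Let $h(x)=2\|x\|^{1+\alpha}$, $\Omega=\{x\in\mathbb{R}^d: \|x\|\in[\delta,1],\ x\notin C_i \text{ for all } i\in[N]\}$, and wall function $\mathcal W(x)=\sup_{y\in\Omega}\{h(y)+\nabla h(y)\cdot(x-y)\}$ (supremum of the empty set is $-\infty$). *)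

theory Defs
  imports "HOL-Analysis.Analysis"
begin

definition corr_cone :: "'a::euclidean_space \<Rightarrow> real \<Rightarrow> 'a set" where
  "corr_cone v \<kappa> = {x. x \<noteq> 0 \<and> \<bar>v \<bullet> x\<bar> / norm x \<ge> \<kappa>}"

definition hfun :: "real \<Rightarrow> 'a::euclidean_space \<Rightarrow> real" where
  "hfun \<alpha> x = 2 * norm x powr (1 + \<alpha>)"

definition grad :: "('a::euclidean_space \<Rightarrow> real) \<Rightarrow> 'a \<Rightarrow> 'a" where
  "grad f y = (THE D. GDERIV f y :> D)"

definition Omega :: "nat \<Rightarrow> (nat \<Rightarrow> 'a::euclidean_space) \<Rightarrow> real \<Rightarrow> real \<Rightarrow> 'a set" where
  "Omega N v \<kappa> \<delta> = {x. \<delta> \<le> norm x \<and> norm x \<le> 1 \<and> (\<forall>i\<in>{1..N}. x \<notin> corr_cone (v i) \<kappa>)}"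

text \<open>Wall function: supremum (in the extended reals, so that Sup {} = -infinity)
  of the tangent planes of h at points of Omega.\<close>
definition wall :: "real \<Rightarrow> 'a::euclidean_space set \<Rightarrow> 'a \<Rightarrow> ereal" where
  "wall \<alpha> \<Omega> x = (SUP y\<in>\<Omega>. ereal (hfun \<alpha> y + grad (hfun \<alpha>) y \<bullet> (x - y)))"

definition xstar :: "nat \<Rightarrow> (nat \<Rightarrow> 'a::euclidean_space) \<Rightarrow> 'a" where
  "xstar N v = - ((1 / sqrt (real N)) *\<^sub>R (\<Sum>i=1..N. v i))"

end

theory Submission
  imports Defs
begin

text \<open>Write \<open>r = \<parallel>y\<parallel>\<close> for \<open>y \<in> \<Omega>\<close>. Since \<open>h\<close> is radial, its tangent plane at \<open>y\<close>
  evaluated at \<open>x\<^sup>*\<close> equals \<open>2 r\<^sup>\<alpha> ((1 + \<alpha>) s - \<alpha> r)\<close> with \<open>s = sgn y \<bullet> x\<^sup>*\<close>. Because \<open>y\<close>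
  avoids every cone, \<open>|v\<^sub>i \<bullet> y| < \<kappa> r\<close>, hence \<open>|s| \<le> \<kappa> \<surd>N\<close>; and the choice of \<open>\<alpha>\<close> makes
  \<open>\<delta>\<^sup>\<alpha> = 1/2\<close>, so \<open>2 r\<^sup>\<alpha> \<ge> 1\<close>. The relation between \<open>\<delta>\<close>, \<open>\<kappa>\<close> and \<open>N\<close> is exactly what makes
  the bracket at most \<open>-(\<delta>\<alpha> + 1/\<surd>N)/2\<close>, and the claim follows.\<close>

lemma grad_eqI:
  assumes "GDERIV f y :> D"
  shows "grad f y = D"
proof -
  have "D' = D" if "GDERIV f y :> D'" for D'
  proof -
    have "(\<lambda>h. h \<bullet> D') = (\<lambda>h. h \<bullet> D)"
      using that assms unfolding gderiv_def by (rule has_derivative_unique)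
    hence "(D' - D) \<bullet> D' = (D' - D) \<bullet> D" by metis
    hence "(D' - D) \<bullet> (D' - D) = 0" by (simp add: inner_diff_right)
    thus "D' = D" by simp
  qed
  thus ?thesis unfolding grad_def using assms by (rule the_equality[rotated])
qed

lemma grad_hfun:
  fixes y :: "'a::euclidean_space"
  assumes "y \<noteq> 0"
  shows "grad (hfun \<alpha>) y = (2 * (1 + \<alpha>) * norm y powr \<alpha>) *\<^sub>R sgn y"
proof -
  have "DERIV (\<lambda>z. z powr (1 + \<alpha>)) (norm y) :> (1 + \<alpha>) * norm y powr \<alpha>"
    using has_real_derivative_powr[of "norm y" "1 + \<alpha>"] assms by simp
  from GDERIV_DERIV_compose[OF GDERIV_norm[OF assms] this]
  have "GDERIV (\<lambda>x. norm x powr (1 + \<alpha>)) y :> ((1 + \<alpha>) * norm y powr \<alpha>) *\<^sub>R sgn y" .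
  from GDERIV_mult[OF GDERIV_const[of 2] this]
  have "GDERIV (hfun \<alpha>) y :> (2 * (1 + \<alpha>) * norm y powr \<alpha>) *\<^sub>R sgn y"
    by (simp only: hfun_def[abs_def] mult.assoc scaleR_scaleR scaleR_zero_right add_0_right)
  thus ?thesis by (rule grad_eqI)
qed

lemma hfun_tangent_eq:
  fixes x y :: "'a::euclidean_space"
  assumes "y \<noteq> 0"
  shows "hfun \<alpha> y + grad (hfun \<alpha>) y \<bullet> (x - y)
    = 2 * norm y powr \<alpha> * ((1 + \<alpha>) * (sgn y \<bullet> x) - \<alpha> * norm y)"
proof -
  have "sgn y \<bullet> y = norm y"
    using assms by (simp add: sgn_div_norm power2_norm_eq_inner[symmetric] power2_eq_square)
  moreover have "norm y powr (1 + \<alpha>) = norm y powr \<alpha> * norm y"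
    using assms by (simp add: powr_add)
  ultimately show ?thesis
    unfolding grad_hfun[OF assms] hfun_def by (simp add: inner_diff_right algebra_simps)
qed

lemma powr_inverse_log2_inverse:
  fixes \<delta> :: real
  assumes "0 < \<delta>" "\<delta> < 1"
  shows "\<delta> powr (1 / log 2 (1 / \<delta>)) = 1 / 2"
proof -
  have "ln \<delta> * (1 / log 2 (1 / \<delta>)) = - ln 2"
    using assms by (simp add: log_def ln_div)
  hence "ln (\<delta> powr (1 / log 2 (1 / \<delta>))) = ln (1 / 2)"
    using assms by (simp add: ln_powr ln_div mult.commute)
  thus ?thesis using assms by (subst (asm) ln_inj_iff) auto
qed

lemma Omega_inner_bound:
  assumes "y \<in> Omega N v \<kappa> \<delta>" "0 < \<delta>" "i \<in> {1..N}"
  shows "\<bar>v i \<bullet> y\<bar> \<le> \<kappa> * norm y"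
proof -
  have "y \<noteq> 0" using assms by (auto simp: Omega_def)
  with assms have "\<not> \<kappa> * norm y \<le> \<bar>v i \<bullet> y\<bar>"
    by (auto simp: Omega_def corr_cone_def field_simps)
  thus ?thesis by simp
qed

text \<open>The triangle inequality suffices here.\<close>

lemma inner_xstar_bound:
  fixes v :: "nat \<Rightarrow> 'a::euclidean_space"
  assumes "\<And>i. i \<in> {1..N} \<Longrightarrow> \<bar>v i \<bullet> y\<bar> \<le> \<kappa> * norm y"
  shows "\<bar>xstar N v \<bullet> y\<bar> \<le> sqrt N * \<kappa> * norm y"
proof -
  have "\<bar>xstar N v \<bullet> y\<bar> = \<bar>\<Sum>i=1..N. v i \<bullet> y\<bar> / sqrt N"
    by (simp add: xstar_def inner_sum_left)
  also have "\<dots> \<le> (\<Sum>i=1..N. \<kappa> * norm y) / sqrt N"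
    using assms by (intro divide_right_mono order_trans[OF sum_abs] sum_mono) auto
  also have "\<dots> = sqrt N * \<kappa> * norm y"
    by (cases "N = 0") (simp_all add: field_simps real_div_sqrt)
  finally show ?thesis .
qed

lemma tangent_value_le:
  fixes \<alpha> \<delta> r s K c :: real
  assumes "0 < \<alpha>" "\<alpha> \<le> 1" "\<delta> \<le> r" "1 / 2 \<le> r powr \<alpha>"
    and "\<bar>s\<bar> \<le> K" "0 \<le> K" "0 \<le> c" "\<delta> * \<alpha> = 4 * K + c"
  shows "2 * r powr \<alpha> * ((1 + \<alpha>) * s - \<alpha> * r) \<le> - c"
proof -
  have "(1 + \<alpha>) * s \<le> (1 + \<alpha>) * K"
    using assms by (intro mult_left_mono) auto
  also have "\<dots> \<le> 2 * K" using assms by (intro mult_right_mono) auto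
  finally have "(1 + \<alpha>) * s \<le> 2 * K" .
  moreover have "\<delta> * \<alpha> \<le> r * \<alpha>" using assms by (intro mult_right_mono) auto
  ultimately have bracket: "(1 + \<alpha>) * s - \<alpha> * r \<le> - (\<delta> * \<alpha> + c) / 2"
    using assms(8) by (simp add: mult.commute)
  have "2 * r powr \<alpha> * ((1 + \<alpha>) * s - \<alpha> * r) \<le> 2 * r powr \<alpha> * (- (\<delta> * \<alpha> + c) / 2)"
    using bracket assms by (intro mult_left_mono) auto
  also have "\<dots> \<le> 1 * (- (\<delta> * \<alpha> + c) / 2)"
    using assms by (intro mult_right_mono_neg) auto
  also have "\<dots> \<le> - c" using assms by simp
  finally show ?thesis .
qed

theorem mainTheorem2:
  fixes v :: "nat \<Rightarrow> 'a::euclidean_space"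
    and N :: nat and \<kappa> \<delta> \<alpha> :: real
  assumes N_pos: "N \<ge> 1"
    and orthonormal: "\<And>i j. i \<in> {1..N} \<Longrightarrow> j \<in> {1..N} \<Longrightarrow> v i \<bullet> v j = (if i = j then 1 else 0)"
    and kappa_pos: "\<kappa> > 0"
    and delta_pos: "0 < \<delta>" and delta_le: "\<delta> \<le> 1/2"
    and alpha_def: "\<alpha> = 1 / log 2 (1 / \<delta>)"
    and relation: "\<delta> / log 2 (1 / \<delta>) = 4 * \<kappa> * sqrt (real N) + 1 / sqrt (real N)"
  shows "wall \<alpha> (Omega N v \<kappa> \<delta>) (xstar N v) \<le> ereal (- 1 / sqrt (real N))"
proof -
  have "1 \<le> log 2 (1 / \<delta>)"
    using delta_pos delta_le by (simp add: le_log_iff field_simps)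
  hence alpha: "0 < \<alpha>" "\<alpha> \<le> 1" using alpha_def by auto
  have half: "\<delta> powr \<alpha> = 1 / 2"
    using powr_inverse_log2_inverse delta_pos delta_le alpha_def by simp
  show ?thesis unfolding wall_def
  proof (rule SUP_least)
    fix y assume y: "y \<in> Omega N v \<kappa> \<delta>"
    hence r: "\<delta> \<le> norm y" and "y \<noteq> 0" using delta_pos by (auto simp: Omega_def)
    have "\<bar>sgn y \<bullet> xstar N v\<bar> \<le> sqrt N * \<kappa>"
      using inner_xstar_bound[OF Omega_inner_bound[OF y delta_pos]] \<open>y \<noteq> 0\<close>
      by (simp add: sgn_div_norm inner_commute field_simps)
    moreover have "1 / 2 \<le> norm y powr \<alpha>"
      using half r delta_pos alpha by (metis powr_mono2 less_imp_le)
    ultimately show "ereal (hfun \<alpha> y + grad (hfun \<alpha>) y \<bullet> (xstar N v - y)) \<le> ereal (- 1 / sqrt N)"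
      using tangent_value_le[OF alpha r, of "sgn y \<bullet> xstar N v" "sqrt N * \<kappa>" "1 / sqrt N"]
        relation alpha_def kappa_pos
      by (simp add: hfun_tangent_eq[OF \<open>y \<noteq> 0\<close>] mult.commute)
  qed
qed

end
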